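(* Let $f:\mathbb{R}^n\to\mathbb{R}$ and $c:\mathbb{R}^n\to\mathbb{R}^m$ ($m<n$) be smooth, with $g(x)=\nabla f(x)$ and Jacobian $J(x)=\nabla c(x)\in\mathbb{R}^{m\times n}$. Suppose noisy evaluations $\tilde f,\tilde c,\tilde g,\tilde J$ satisfy, for all $x$, $|\tilde f(x)-f(x)|\le\epsilon_f$, $\|\tilde c(x)-c(x)\|_1\le\epsilon_c$, $\|\tilde g(x)-g(x)\|\le\epsilon_g$, $\|\tilde J(x)-J(x)\|_{1,2}\le\epsilon_J$. Let $\{x_k\}$ be a sequence of points with $\sigma_{\min}(J_k)\ge\gamma$ for all $k$, where $\gamma>\epsilon_J$, and set $\delta=1/(\gamma-\epsilon_J)$, $\eta=1/\gamma$. For $\beta_k>0$ let $d_k$ solve $\min_d\ \tfrac12\beta_k\|d\|^2+\tilde g_k^Td$ subject to $\tilde c_k+\tilde J_kd=0$. Fix $\tau\in(0,1)$ and suppose that at every iteration $k$ the penalty parameter $\pi_k>0$ satisfies $$\pi_k\ge\frac{1}{1-\tau}\big\|(\tilde J_k\tilde J_k^T)^{-1}\tilde J_k\tilde g_k\big\|_\infty.$$ Then, with $\ell(x_k;d_k)=g_k^Td_k+\pi_k\|c_k+J_kd_k\|_1-\pi_k\|c_k\|_1$, $$\ell(x_k;d_k)\le-\frac{1}{\beta_k}g_k^TP_kg_k+\frac{1}{\beta_k}\big(\|g_k\|^2\eta\epsilon_J+\epsilon_g\|g_k\|\big)-\tau\pi_k\|c_k\|_1+\epsilon_g\delta(\|c_k\|_1+\epsilon_c)$$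 $$\qquad+\pi_k\Big((2-\tau)\epsilon_c+\epsilon_J\Big(\delta(\|c_k\|_1+\epsilon_c)+\frac{1}{\beta_k}\big(\|P_kg_k\|+\|g_k\|\eta\epsilon_J+\epsilon_g\big)\Big)\Big).$$
   Context: $\|\cdot\|$ denotes the Euclidean norm; $\|\cdot\|_{1,2}$ is the matrix norm $\sup_{x\ne0}\|Ax\|_1/\|x\|$ for $A\in\mathbb{R}^{m\times n}$; $\sigma_{\min}$ is the smallest singular value. Subscript $k$ denotes evaluation at $x_k$: $g_k=g(x_k)$, $c_k=c(x_k)$, $J_k=J(x_k)$, $\tilde g_k=\tilde g(x_k)$, $\tilde c_k=\tilde c(x_k)$, $\tilde J_k=\tilde J(x_k)$. $P_k=I-J_k^T(J_kJ_k^T)^{-1}J_k$ is the orthogonal projection onto the null space of $J_k$. *)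

theory Defs
  imports "HOL-Analysis.Analysis"
begin

definition norm1 :: "real^'m \<Rightarrow> real" where
  "norm1 v = (\<Sum>i\<in>UNIV. \<bar>v $ i\<bar>)"

definition norm_inf :: "real^'m \<Rightarrow> real" where
  "norm_inf v = Max ((\<lambda>i. \<bar>v $ i\<bar>) ` UNIV)"

definition norm12 :: "real^'n^'m \<Rightarrow> real" where
  "norm12 A = Sup {norm1 (A *v x) / norm x | x. x \<noteq> 0}"

text \<open>smallest singular value of an m x n matrix with m <= n
  (the m singular values are those of A^T; smallest = min over unit y of ||A^T y||)\<close>
definition sigma_min :: "real^'n^'m \<Rightarrow> real" where
  "sigma_min A = Inf {norm (transpose A *v y) | y. norm y = 1}"

definition null_proj :: "real^'n^'m \<Rightarrow> real^'n^'n" where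
  "null_proj J = mat 1 - transpose J ** matrix_inv (J ** transpose J) ** J"

end

theory Submission
  imports Defs
begin

(* Write Jt, ct, gt for the noisy data at x_k and Pt = null_proj Jt. The step splits as
   d = Pt d + (I - Pt) d. Feasibility fixes the row-space part, -Jt^T (Jt Jt^T)^-1 ct, whose
   length is at most (norm1 c + eps_c)/(gamma - eps_J) because sigma_min Jt >= gamma - eps_J,
   and whose inner product with gt is the multiplier estimate (Jt Jt^T)^-1 Jt gt against ct,
   which the penalty condition controls. Optimality of the subproblem makes the null-space
   part -(1/beta) Pt gt. Both row spaces have dimension m, so the gap between them is
   symmetric and ||Pt - P|| <= eps_J/gamma; this compares Pt gt with P g. Finally
   c + J d = (c - ct) - (Jt - J) d bounds the linearized constraint violation. *)

lemma norm1_nonneg: "0 \<le> norm1 v"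
  unfolding norm1_def by (simp add: sum_nonneg)

lemma norm_le_norm1: "norm v \<le> norm1 v"
  unfolding norm1_def by (rule norm_le_l1_cart)

lemma norm1_triangle_ineq: "norm1 (a + b) \<le> norm1 a + norm1 b"
  unfolding norm1_def by (simp add: sum.distrib[symmetric] sum_mono abs_triangle_ineq)

lemma norm1_triangle_ineq4: "norm1 (a - b) \<le> norm1 a + norm1 b"
  unfolding norm1_def by (simp add: sum.distrib[symmetric] sum_mono abs_triangle_ineq4)

lemma norm1_minus_commute: "norm1 (a - b) = norm1 (b - a)"
  unfolding norm1_def by (simp add: abs_minus_commute)

lemma abs_le_norm_inf: "\<bar>a $ i\<bar> \<le> norm_inf a"
  unfolding norm_inf_def by (rule Max_ge) auto

lemma norm_inf_nonneg: "0 \<le> norm_inf v"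
  using abs_le_norm_inf[of v undefined] by linarith

lemma abs_inner_le_norm_inf_mult_norm1: "\<bar>a \<bullet> b\<bar> \<le> norm_inf a * norm1 b"
proof -
  have "\<bar>a \<bullet> b\<bar> \<le> (\<Sum>i\<in>UNIV. \<bar>a $ i * b $ i\<bar>)"
    unfolding inner_vec_def inner_real_def by (rule sum_abs)
  also have "\<dots> \<le> (\<Sum>i\<in>UNIV. norm_inf a * \<bar>b $ i\<bar>)"
    by (rule sum_mono) (simp add: abs_mult mult_right_mono abs_le_norm_inf)
  also have "\<dots> = norm_inf a * norm1 b"
    by (simp add: norm1_def sum_distrib_left)
  finally show ?thesis .
qed

lemma norm1_mult_le_norm12:
  fixes E :: "real^'n^'m"
  shows "norm1 (E *v z) \<le> norm12 E * norm z"
proof (cases "z = 0")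
  case True
  then show ?thesis by (simp add: norm1_def)
next
  case False
  define K where "K = real CARD('m) * onorm ((*v) E)"
  have "norm1 (E *v x) \<le> K * norm x" for x
  proof -
    have "norm1 (E *v x) \<le> (\<Sum>i::'m\<in>UNIV. norm (E *v x))"
      unfolding norm1_def by (rule sum_mono) (rule component_le_norm_cart)
    also have "\<dots> \<le> real CARD('m) * (onorm ((*v) E) * norm x)"
      by (simp add: mult_left_mono onorm)
    finally show ?thesis by (simp add: K_def mult.assoc)
  qed
  then have "bdd_above {norm1 (E *v x) / norm x | x. x \<noteq> 0}"
    by (intro bdd_aboveI[of _ K]) (auto simp: divide_le_eq)
  then have "norm1 (E *v z) / norm z \<le> norm12 E"
    unfolding norm12_def by (rule cSup_upper[rotated]) (use False in blast)
  then show ?thesis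
    using False by (simp add: divide_le_eq)
qed

lemma norm1_bound_nonneg:
  fixes E :: "real^'n^'m"
  assumes "\<And>z. norm1 (E *v z) \<le> e * norm z"
  shows "0 \<le> e"
  using assms[of "axis undefined 1"] norm1_nonneg[of "E *v axis undefined 1"] by simp

lemma sigma_min_le_norm_transpose:
  fixes B :: "real^'n^'m"
  assumes "gam \<le> sigma_min B"
  shows "gam * norm y \<le> norm (transpose B *v y)"
proof (cases "y = 0")
  case True
  then show ?thesis by simp
next
  case False
  have "bdd_below {norm (transpose B *v y) | y. norm y = 1}"
    by (rule bdd_belowI[of _ 0]) auto
  moreover have "norm ((1 / norm y) *\<^sub>R y) = 1"
    using False by simp
  ultimately have "sigma_min B \<le> norm (transpose B *v ((1 / norm y) *\<^sub>R y))"
    unfolding sigma_min_def by (intro cInf_lower) blast+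
  also have "\<dots> = norm (transpose B *v y) / norm y"
    by (simp only: matrix_vector_mult_scaleR) simp
  finally have "sigma_min B * norm y \<le> norm (transpose B *v y)"
    using False by (simp add: le_divide_eq)
  then show ?thesis
    using assms by (meson mult_right_mono norm_ge_zero order_trans)
qed

lemma le_of_square_le_mult:
  fixes a b :: real
  assumes "a\<^sup>2 \<le> b * a" and "0 \<le> b"
  shows "a \<le> b"
  using assms by (cases "a \<le> 0") (auto simp: power2_eq_square mult_le_cancel_right)

lemma mult_square_le_of_le_mult:
  fixes a b c t :: real
  assumes "0 \<le> t" and "t * c\<^sup>2 \<le> a\<^sup>2" and "a\<^sup>2 \<le> c * b"
  shows "t * a\<^sup>2 \<le> b\<^sup>2"
proof (cases "a = 0")
  case True
  then show ?thesis by simp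
next
  case False
  have "a\<^sup>2 * (t * a\<^sup>2) = t * (a\<^sup>2)\<^sup>2"
    by (simp add: power2_eq_square mult_ac)
  also have "\<dots> \<le> t * (c * b)\<^sup>2"
    using assms(1,3) by (intro mult_left_mono power_mono) simp_all
  also have "\<dots> = (t * c\<^sup>2) * b\<^sup>2"
    by (simp add: power_mult_distrib mult.assoc)
  also have "\<dots> \<le> a\<^sup>2 * b\<^sup>2"
    using assms(2) by (rule mult_right_mono) simp
  finally show ?thesis
    by (rule mult_left_le_imp_le) (use False in simp)
qed

lemma norm_transpose_mult_le:
  fixes E :: "real^'n^'m"
  assumes bound: "\<And>z. norm (E *v z) \<le> e * norm z"
  shows "norm (transpose E *v y) \<le> e * norm y"
proof -
  have "norm (E *v axis undefined 1) \<le> e"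
    using bound[of "axis undefined 1"] by simp
  then have "0 \<le> e"
    by (meson norm_ge_zero order_trans)
  define w where "w = transpose E *v y"
  have "(norm w)\<^sup>2 = y \<bullet> (E *v w)"
    by (simp add: w_def power2_norm_eq_inner dot_lmul_matrix)
  also have "\<dots> \<le> norm y * (e * norm w)"
    by (rule order_trans[OF norm_cauchy_schwarz mult_left_mono[OF bound norm_ge_zero]])
  finally have "(norm w)\<^sup>2 \<le> e * norm y * norm w"
    by (simp add: mult_ac)
  then show ?thesis
    unfolding w_def by (rule le_of_square_le_mult) (simp add: \<open>0 \<le> e\<close>)
qed

lemma matrix_inv_right:
  assumes "invertible M" shows "M ** matrix_inv M = mat 1"
  using assms unfolding invertible_def matrix_inv_def by (metis (mono_tags, lifting) someI_ex)

lemma matrix_inv_left: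
  assumes "invertible M" shows "matrix_inv M ** M = mat 1"
  using assms unfolding invertible_def matrix_inv_def by (metis (mono_tags, lifting) someI_ex)

lemma norm_transpose_squared:
  fixes A :: "real^'n^'m"
  shows "(norm (transpose A *v y))\<^sup>2 = y \<bullet> ((A ** transpose A) *v y)"
proof -
  have "y \<bullet> ((A ** transpose A) *v y) = (y v* A) \<bullet> (transpose A *v y)"
    by (simp only: matrix_vector_mul_assoc[symmetric] dot_lmul_matrix[symmetric])
  then show ?thesis
    by (simp only: power2_norm_eq_inner transpose_matrix_vector)
qed

lemma invertible_mult_transpose:
  fixes A :: "real^'n^'m"
  assumes "0 < kap" and sigma_A: "\<And>y. kap * norm y \<le> norm (transpose A *v y)"
  shows "invertible (A ** transpose A)"
proof -
  have "y = 0" if "(A ** transpose A) *v y = 0" for y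
  proof -
    have "norm (transpose A *v y) = 0"
      using norm_transpose_squared[of A y] that by simp
    then have "kap * norm y \<le> 0"
      using sigma_A[of y] by simp
    then show "y = 0"
      using \<open>0 < kap\<close> by (simp add: mult_le_0_iff)
  qed
  then show ?thesis
    using invertible_left_inverse matrix_left_invertible_ker by blast
qed

lemma transpose_eq_0_imp_eq_0:
  fixes B :: "real^'n^'m"
  assumes "invertible (B ** transpose B)" and "transpose B *v y = 0"
  shows "y = 0"
proof -
  have "(B ** transpose B) *v y = 0"
    using assms(2) by (metis matrix_vector_mul_assoc matrix_vector_mult_0_right)
  then show ?thesis
    using assms(1) invertible_left_inverse matrix_left_invertible_ker by blast
qed

lemma norm_transpose_le_norm_mult_transpose:
  fixes A :: "real^'n^'m"
  assumes "0 < kap" and sigma_A: "\<And>y. kap * norm y \<le> norm (transpose A *v y)"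
  shows "kap * norm (transpose A *v y) \<le> norm ((A ** transpose A) *v y)"
proof (rule le_of_square_le_mult)
  have "(kap * norm (transpose A *v y))\<^sup>2 = kap\<^sup>2 * (y \<bullet> ((A ** transpose A) *v y))"
    by (simp only: power_mult_distrib norm_transpose_squared)
  also have "\<dots> \<le> kap\<^sup>2 * (norm y * norm ((A ** transpose A) *v y))"
    by (simp add: mult_left_mono norm_cauchy_schwarz)
  also have "\<dots> = norm ((A ** transpose A) *v y) * kap * (kap * norm y)"
    by (simp add: power2_eq_square mult_ac)
  also have "\<dots> \<le> norm ((A ** transpose A) *v y) * kap * norm (transpose A *v y)"
    by (rule mult_left_mono[OF sigma_A]) (use \<open>0 < kap\<close> in simp)
  finally show "(kap * norm (transpose A *v y))\<^sup>2
      \<le> norm ((A ** transpose A) *v y) * (kap * norm (transpose A *v y))"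
    by (simp add: mult_ac)
qed simp

lemma inner_transpose_matrix_inv:
  fixes A :: "real^'n^'m"
  assumes full_rank: "invertible (A ** transpose A)"
  shows "g \<bullet> (transpose A *v (matrix_inv (A ** transpose A) *v c))
    = (matrix_inv (A ** transpose A) *v (A *v g)) \<bullet> c"
proof -
  let ?M = "A ** transpose A"
  have M_inv: "?M *v (matrix_inv ?M *v v) = v" for v
    by (simp add: matrix_vector_mul_assoc matrix_inv_right[OF full_rank])
  have "g \<bullet> (transpose A *v (matrix_inv ?M *v c)) = (A *v g) \<bullet> (matrix_inv ?M *v c)"
    by (metis dot_lmul_matrix inner_commute transpose_matrix_vector)
  also have "\<dots> = (?M *v (matrix_inv ?M *v (A *v g))) \<bullet> (matrix_inv ?M *v c)"
    by (simp only: M_inv)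
  also have "\<dots> = (matrix_inv ?M *v (A *v g)) \<bullet> (?M *v (matrix_inv ?M *v c))"
    by (metis dot_lmul_matrix matrix_transpose_mul transpose_matrix_vector transpose_transpose)
  also have "\<dots> = (matrix_inv ?M *v (A *v g)) \<bullet> c"
    by (simp only: M_inv)
  finally show ?thesis .
qed

section \<open>Projections onto the row space and the null space\<close>

definition row_proj :: "real^'n^'m \<Rightarrow> real^'n^'n" where
  "row_proj A = transpose A ** matrix_inv (A ** transpose A) ** A"

lemma null_proj_eq: "null_proj A = mat 1 - row_proj A"
  by (simp add: null_proj_def row_proj_def)

lemma null_proj_add_row_proj: "null_proj A *v z + row_proj A *v z = z"
  by (simp add: null_proj_eq matrix_vector_mult_diff_rdistrib)

lemma row_proj_mult: "row_proj A *v z = transpose A *v (matrix_inv (A ** transpose A) *v (A *v z))"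
  by (simp only: row_proj_def matrix_vector_mul_assoc matrix_mul_assoc)

context
  fixes A :: "real^'n^'m"
  assumes full_rank: "invertible (A ** transpose A)"
begin

lemma mult_null_proj: "A *v (null_proj A *v z) = 0"
proof -
  have "A ** row_proj A = A"
    unfolding row_proj_def
    by (metis matrix_mul_assoc matrix_inv_right[OF full_rank] matrix_mul_lid)
  then show ?thesis
    by (simp add: null_proj_eq matrix_vector_mult_diff_rdistrib matrix_vector_mult_diff_distrib
        matrix_vector_mul_assoc)
qed

lemma row_proj_transpose: "row_proj A *v (transpose A *v y) = transpose A *v y"
proof -
  have "row_proj A ** transpose A = transpose A"
    unfolding row_proj_def
    by (metis matrix_mul_assoc matrix_inv_left[OF full_rank] matrix_mul_rid)
  then show ?thesis
    by (metis matrix_vector_mul_assoc)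
qed

lemma null_proj_transpose: "null_proj A *v (transpose A *v y) = 0"
  using null_proj_add_row_proj[of A "transpose A *v y"] row_proj_transpose by simp

lemma inner_transpose_null_proj: "(transpose A *v y) \<bullet> (null_proj A *v z) = 0"
  by (metis dot_lmul_matrix inner_zero_right mult_null_proj transpose_matrix_vector)

lemma inner_row_proj_null_proj: "(row_proj A *v w) \<bullet> (null_proj A *v z) = 0"
  by (simp only: row_proj_mult inner_transpose_null_proj)

lemma norm_null_proj_row_proj:
  "(norm z)\<^sup>2 = (norm (null_proj A *v z))\<^sup>2 + (norm (row_proj A *v z))\<^sup>2"
proof -
  have "orthogonal (null_proj A *v z) (row_proj A *v z)"
    unfolding orthogonal_def by (metis inner_commute inner_row_proj_null_proj)
  then show ?thesis
    using norm_add_Pythagorean null_proj_add_row_proj by metis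
qed

lemma norm_null_proj_le: "norm (null_proj A *v z) \<le> norm z"
  by (rule power2_le_imp_le) (use norm_null_proj_row_proj[of z] in simp_all)

lemma inner_null_proj_right: "z \<bullet> (null_proj A *v w) = (null_proj A *v z) \<bullet> (null_proj A *v w)"
proof -
  have "z \<bullet> (null_proj A *v w) = (null_proj A *v z + row_proj A *v z) \<bullet> (null_proj A *v w)"
    by (simp only: null_proj_add_row_proj)
  then show ?thesis
    by (simp only: inner_add_left inner_row_proj_null_proj add_0_right)
qed

lemma inner_row_proj_right: "z \<bullet> (row_proj A *v w) = (row_proj A *v z) \<bullet> (row_proj A *v w)"
proof -
  have "z \<bullet> (row_proj A *v w) = (null_proj A *v z + row_proj A *v z) \<bullet> (row_proj A *v w)"
    by (simp only: null_proj_add_row_proj)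
  then show ?thesis
    by (metis inner_add_left inner_commute inner_row_proj_null_proj add_0_left)
qed

end

section \<open>Gap between row spaces\<close>

(* The one-sided gap ||P_A Q_B|| <= s between the row spaces, with Q_B = row_proj B. *)
definition row_space_gap_le :: "real^'n^'m \<Rightarrow> real^'n^'m \<Rightarrow> real \<Rightarrow> bool" where
  "row_space_gap_le A B s \<longleftrightarrow>
     (\<forall>y. norm (null_proj A *v (transpose B *v y)) \<le> s * norm (transpose B *v y))"

(* Both row spaces have dimension m: if s < 1, the square matrix A B^T is injective, hence
   onto, so Q_A maps the row space of B onto the row space of A. *)
lemma row_proj_transpose_surj:
  fixes A B :: "real^'n^'m"
  assumes full_rank_A: "invertible (A ** transpose A)"
    and full_rank_B: "invertible (B ** transpose B)"
    and gap: "row_space_gap_le A B s" and "s < 1"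
  shows "\<exists>y. row_proj A *v (transpose B *v y) = transpose A *v v"
proof -
  have "y = 0" if "(A ** transpose B) *v y = 0" for y
  proof -
    let ?u = "transpose B *v y"
    have "row_proj A *v ?u = 0"
      using that by (simp only: row_proj_mult matrix_vector_mul_assoc[of A] matrix_vector_mult_0_right)
    then have "null_proj A *v ?u = ?u"
      using null_proj_add_row_proj[of A ?u] by simp
    then have "norm ?u \<le> s * norm ?u"
      using gap unfolding row_space_gap_le_def by metis
    then have "?u = 0"
      using \<open>s < 1\<close> by (smt (verit) mult_le_cancel_right1 norm_ge_zero norm_le_zero_iff)
    then show "y = 0"
      using full_rank_B transpose_eq_0_imp_eq_0 by blast
  qed
  then have "surj ((*v) (A ** transpose B))"
    using matrix_left_invertible_ker matrix_left_right_inverse matrix_right_invertible_surjective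
    by blast
  then obtain y where "(A ** transpose B) *v y = (A ** transpose A) *v v"
    by (metis surjD)
  then have "row_proj A *v (transpose B *v y) = row_proj A *v (transpose A *v v)"
    by (simp only: row_proj_mult matrix_vector_mul_assoc[of A])
  then show ?thesis
    using row_proj_transpose[OF full_rank_A] by metis
qed

(* Write x in the row space of A as Q_A u with u in the row space of B. Then
   ||x||^2 = <u, Q_B x> and ||x||^2 >= (1 - s^2) ||u||^2, so ||Q_B x||^2 >= (1 - s^2) ||x||^2. *)
lemma row_space_gap_le_sym:
  fixes A B :: "real^'n^'m"
  assumes full_rank_A: "invertible (A ** transpose A)"
    and full_rank_B: "invertible (B ** transpose B)"
    and gap: "row_space_gap_le A B s" and "0 \<le> s" "s < 1"
  shows "row_space_gap_le B A s"
  unfolding row_space_gap_le_def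
proof
  fix v
  define x where "x = transpose A *v v"
  obtain y where x_eq: "row_proj A *v (transpose B *v y) = x"
    using row_proj_transpose_surj[OF full_rank_A full_rank_B gap \<open>s < 1\<close>] unfolding x_def by blast
  define u where "u = transpose B *v y"
  have "(norm (null_proj A *v u))\<^sup>2 \<le> (s * norm u)\<^sup>2"
    using gap unfolding row_space_gap_le_def u_def by (intro power_mono) auto
  then have u_le: "(1 - s\<^sup>2) * (norm u)\<^sup>2 \<le> (norm x)\<^sup>2"
    using norm_null_proj_row_proj[OF full_rank_A, of u] x_eq u_def
    by (simp add: algebra_simps power_mult_distrib)
  have "(norm x)\<^sup>2 = u \<bullet> x"
    using inner_row_proj_right[OF full_rank_A, of u u] x_eq u_def by (simp add: power2_norm_eq_inner)
  also have "\<dots> = u \<bullet> (null_proj B *v x + row_proj B *v x)"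
    by (simp only: null_proj_add_row_proj)
  also have "\<dots> = u \<bullet> (row_proj B *v x)"
    using inner_transpose_null_proj[OF full_rank_B, of y x] by (simp add: u_def inner_add_right)
  also have "\<dots> \<le> norm u * norm (row_proj B *v x)"
    by (rule norm_cauchy_schwarz)
  finally have x_le: "(norm x)\<^sup>2 \<le> norm u * norm (row_proj B *v x)" .
  have "0 \<le> 1 - s\<^sup>2"
    using power_le_one[of s 2] \<open>0 \<le> s\<close> \<open>s < 1\<close> by simp
  then have "(1 - s\<^sup>2) * (norm x)\<^sup>2 \<le> (norm (row_proj B *v x))\<^sup>2"
    using u_le x_le by (rule mult_square_le_of_le_mult)
  then have "(norm (null_proj B *v x))\<^sup>2 \<le> (s * norm x)\<^sup>2"
    using norm_null_proj_row_proj[OF full_rank_B, of x] by (simp add: algebra_simps power_mult_distrib)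
  then show "norm (null_proj B *v (transpose A *v v)) \<le> s * norm (transpose A *v v)"
    unfolding x_def[symmetric] by (rule power2_le_imp_le) (simp add: \<open>0 \<le> s\<close>)
qed

lemma norm_row_proj_null_proj_le:
  fixes A B :: "real^'n^'m"
  assumes full_rank_A: "invertible (A ** transpose A)"
    and full_rank_B: "invertible (B ** transpose B)"
    and gap: "row_space_gap_le A B s" and "0 \<le> s"
  shows "norm (row_proj B *v (null_proj A *v p)) \<le> s * norm (null_proj A *v p)"
proof -
  define w where "w = row_proj B *v (null_proj A *v p)"
  have "(norm w)\<^sup>2 = (null_proj A *v p) \<bullet> w"
    using inner_row_proj_right[OF full_rank_B, of "null_proj A *v p" "null_proj A *v p"]
    by (simp add: w_def power2_norm_eq_inner)
  also have "\<dots> = (null_proj A *v w) \<bullet> (null_proj A *v p)"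
    using inner_null_proj_right[OF full_rank_A, of w p] by (simp add: inner_commute)
  also have "\<dots> \<le> norm (null_proj A *v w) * norm (null_proj A *v p)"
    by (rule norm_cauchy_schwarz)
  also have "\<dots> \<le> s * norm w * norm (null_proj A *v p)"
    using gap unfolding row_space_gap_le_def w_def row_proj_mult by (simp add: mult_right_mono)
  finally have "(norm w)\<^sup>2 \<le> s * norm (null_proj A *v p) * norm w"
    by (simp add: mult_ac)
  then show ?thesis
    unfolding w_def by (rule le_of_square_le_mult) (simp add: \<open>0 \<le> s\<close>)
qed

(* P_A - P_B = P_A Q_B - Q_A P_B, and the two terms are orthogonal. *)
lemma norm_null_proj_diff_le:
  fixes A B :: "real^'n^'m"
  assumes full_rank_A: "invertible (A ** transpose A)"
    and full_rank_B: "invertible (B ** transpose B)"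
    and gap: "row_space_gap_le A B s" and "0 \<le> s" "s < 1"
  shows "norm (null_proj A *v g - null_proj B *v g) \<le> s * norm g"
proof -
  define a where "a = null_proj A *v (row_proj B *v g)"
  define b where "b = row_proj A *v (null_proj B *v g)"
  have split: "null_proj A *v g - null_proj B *v g = a - b"
    unfolding a_def b_def null_proj_eq by (simp add: algebra_simps)
  have "orthogonal a (- b)"
    using inner_row_proj_null_proj[OF full_rank_A] unfolding orthogonal_def a_def b_def
    by (simp add: inner_commute)
  then have "(norm (a + - b))\<^sup>2 = (norm a)\<^sup>2 + (norm (- b))\<^sup>2"
    by (rule norm_add_Pythagorean)
  then have "(norm (null_proj A *v g - null_proj B *v g))\<^sup>2 = (norm a)\<^sup>2 + (norm b)\<^sup>2"
    by (simp add: split)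
  also have "\<dots> \<le> (s * norm (row_proj B *v g))\<^sup>2 + (s * norm (null_proj B *v g))\<^sup>2"
  proof (intro add_mono power_mono)
    show "norm a \<le> s * norm (row_proj B *v g)"
      using gap unfolding row_space_gap_le_def a_def row_proj_mult by blast
    show "norm b \<le> s * norm (null_proj B *v g)"
      unfolding b_def using norm_row_proj_null_proj_le[OF full_rank_B full_rank_A
          row_space_gap_le_sym[OF full_rank_A full_rank_B gap \<open>0 \<le> s\<close> \<open>s < 1\<close>] \<open>0 \<le> s\<close>] .
  qed simp_all
  also have "\<dots> = (s * norm g)\<^sup>2"
    using norm_null_proj_row_proj[OF full_rank_B, of g] by (simp add: power_mult_distrib algebra_simps)
  finally show ?thesis
    by (rule power2_le_imp_le) (simp add: \<open>0 \<le> s\<close>)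
qed

lemma row_space_gap_le_perturb:
  fixes A B :: "real^'n^'m"
  assumes full_rank_A: "invertible (A ** transpose A)"
    and sigma_B: "\<And>y. gam * norm y \<le> norm (transpose B *v y)" and "0 < gam"
    and pert: "\<And>y. norm (transpose (A - B) *v y) \<le> e * norm y" and "0 \<le> e"
  shows "row_space_gap_le A B (e / gam)"
  unfolding row_space_gap_le_def
proof
  fix y
  have "transpose B *v y = transpose A *v y - transpose (A - B) *v y"
    by (simp add: vector_matrix_mult_diff_rdistrib)
  then have "null_proj A *v (transpose B *v y) = - (null_proj A *v (transpose (A - B) *v y))"
    by (simp only: matrix_vector_mult_diff_distrib null_proj_transpose[OF full_rank_A] diff_0)
  then have "norm (null_proj A *v (transpose B *v y)) \<le> norm (transpose (A - B) *v y)"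
    using norm_null_proj_le[OF full_rank_A] by simp
  also have "\<dots> \<le> e / gam * (gam * norm y)"
    using pert \<open>0 < gam\<close> by simp
  also have "\<dots> \<le> e / gam * norm (transpose B *v y)"
    by (rule mult_left_mono[OF sigma_B]) (use \<open>0 < gam\<close> \<open>0 \<le> e\<close> in simp)
  finally show "norm (null_proj A *v (transpose B *v y)) \<le> e / gam * norm (transpose B *v y)" .
qed

lemma transpose_lower_bound_perturb:
  fixes A B :: "real^'n^'m"
  assumes err: "\<And>z. norm1 ((A - B) *v z) \<le> e * norm z"
    and sigma_B: "\<And>y. gam * norm y \<le> norm (transpose B *v y)"
  shows "(gam - e) * norm y \<le> norm (transpose A *v y)"
proof -
  have "norm (transpose (A - B) *v y) \<le> e * norm y"
    by (rule norm_transpose_mult_le) (rule order_trans[OF norm_le_norm1 err])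
  moreover have "transpose B *v y = transpose A *v y - transpose (A - B) *v y"
    by (simp add: vector_matrix_mult_diff_rdistrib)
  then have "norm (transpose B *v y) \<le> norm (transpose A *v y) + norm (transpose (A - B) *v y)"
    by (metis norm_triangle_ineq4)
  ultimately show ?thesis
    using sigma_B[of y] by (simp add: algebra_simps)
qed

lemma norm_null_proj_perturb_le:
  fixes A B :: "real^'n^'m"
  assumes err: "\<And>z. norm1 ((A - B) *v z) \<le> e * norm z"
    and sigma_B: "\<And>y. gam * norm y \<le> norm (transpose B *v y)" and "e < gam"
  shows "norm (null_proj A *v g - null_proj B *v g) \<le> e / gam * norm g"
proof -
  have "0 \<le> e"
    by (rule norm1_bound_nonneg[OF err])
  then have "0 < gam" "0 < gam - e"
    using \<open>e < gam\<close> by simp_all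
  have full_rank_A: "invertible (A ** transpose A)"
    by (rule invertible_mult_transpose[OF \<open>0 < gam - e\<close> transpose_lower_bound_perturb[OF err sigma_B]])
  have full_rank_B: "invertible (B ** transpose B)"
    by (rule invertible_mult_transpose[OF \<open>0 < gam\<close> sigma_B])
  have "norm (transpose (A - B) *v y) \<le> e * norm y" for y
    by (rule norm_transpose_mult_le) (rule order_trans[OF norm_le_norm1 err])
  then have "row_space_gap_le A B (e / gam)"
    by (rule row_space_gap_le_perturb[OF full_rank_A sigma_B \<open>0 < gam\<close> _ \<open>0 \<le> e\<close>])
  then show ?thesis
    using \<open>0 \<le> e\<close> \<open>e < gam\<close> \<open>0 < gam\<close>
    by (intro norm_null_proj_diff_le[OF full_rank_A full_rank_B]) simp_all
qed

section \<open>The step of the subproblem\<close>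

(* Moving d along z = P_A (bet d + g) keeps it feasible and changes the objective by
   -||z||^2 / (2 bet). *)
lemma null_proj_qp_solution:
  fixes A :: "real^'n^'m"
  assumes full_rank: "invertible (A ** transpose A)" and "0 < bet"
    and feas: "c + A *v d = 0"
    and opt: "\<And>d'. c + A *v d' = 0 \<Longrightarrow>
        1/2 * bet * (norm d)\<^sup>2 + g \<bullet> d \<le> 1/2 * bet * (norm d')\<^sup>2 + g \<bullet> d'"
  shows "null_proj A *v d = - (1 / bet) *\<^sub>R (null_proj A *v g)"
proof -
  define z where "z = null_proj A *v (bet *\<^sub>R d + g)"
  have "c + A *v (d - (1 / bet) *\<^sub>R z) = 0"
    using feas mult_null_proj[OF full_rank]
    by (simp add: z_def matrix_vector_mult_diff_distrib matrix_vector_mult_scaleR)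
  then have "1/2 * bet * (norm d)\<^sup>2 + g \<bullet> d
      \<le> 1/2 * bet * (norm (d - (1 / bet) *\<^sub>R z))\<^sup>2 + g \<bullet> (d - (1 / bet) *\<^sub>R z)"
    by (rule opt)
  also have "\<dots> = 1/2 * bet * (norm d)\<^sup>2 + g \<bullet> d
      - ((bet *\<^sub>R d + g) \<bullet> z) / bet + (norm z)\<^sup>2 / (2 * bet)"
    using \<open>0 < bet\<close>
    by (simp add: power2_norm_eq_inner inner_diff_left inner_diff_right inner_add_left
        inner_add_right inner_commute field_simps)
  also have "(bet *\<^sub>R d + g) \<bullet> z = (norm z)\<^sup>2"
    using inner_null_proj_right[OF full_rank, of "bet *\<^sub>R d + g" "bet *\<^sub>R d + g"]
    by (simp add: z_def power2_norm_eq_inner)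
  finally have "(norm z)\<^sup>2 \<le> 0"
    using \<open>0 < bet\<close> by (simp add: field_simps)
  then have "bet *\<^sub>R (null_proj A *v d) + null_proj A *v g = 0"
    by (simp add: z_def matrix_vector_right_distrib matrix_vector_mult_scaleR)
  then show ?thesis
    using \<open>0 < bet\<close> by (simp add: eq_neg_iff_add_eq_0[symmetric] field_simps)
qed

lemma row_proj_feasible:
  fixes A :: "real^'n^'m"
  assumes "c + A *v d = 0"
  shows "row_proj A *v d = - (transpose A *v (matrix_inv (A ** transpose A) *v c))"
proof -
  have "A *v d = - c"
    using assms by (simp add: eq_neg_iff_add_eq_0 add.commute)
  then show ?thesis
    by (simp add: row_proj_mult linear_neg[OF matrix_vector_mul_linear])
qed

lemma norm_row_proj_step_le:
  fixes A :: "real^'n^'m"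
  assumes "0 < kap" and sigma_A: "\<And>y. kap * norm y \<le> norm (transpose A *v y)"
    and feas: "ct + A *v d = 0" and err_c: "norm1 (ct - c) \<le> eps_c"
  shows "norm (row_proj A *v d) \<le> (norm1 c + eps_c) / kap"
proof -
  let ?M = "A ** transpose A"
  have full_rank: "invertible ?M"
    by (rule invertible_mult_transpose[OF \<open>0 < kap\<close> sigma_A])
  have "kap * norm (row_proj A *v d) = kap * norm (transpose A *v (matrix_inv ?M *v ct))"
    by (simp only: row_proj_feasible[OF feas] norm_minus_cancel)
  also have "\<dots> \<le> norm (?M *v (matrix_inv ?M *v ct))"
    by (rule norm_transpose_le_norm_mult_transpose[OF \<open>0 < kap\<close> sigma_A])
  also have "\<dots> = norm ct"
    by (simp add: matrix_vector_mul_assoc matrix_inv_right[OF full_rank])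
  also have "\<dots> \<le> norm1 c + eps_c"
    using norm_le_norm1[of ct] norm1_triangle_ineq[of c "ct - c"] err_c by simp
  finally show ?thesis
    using \<open>0 < kap\<close> by (simp add: pos_le_divide_eq mult.commute)
qed

lemma inner_row_proj_step_le:
  fixes A :: "real^'n^'m"
  assumes "0 < kap" and sigma_A: "\<And>y. kap * norm y \<le> norm (transpose A *v y)"
    and feas: "ct + A *v d = 0" and err_c: "norm1 (ct - c) \<le> eps_c"
    and err_g: "norm (gt - g) \<le> eps_g" and "tau < 1"
    and pi_bound: "1 / (1 - tau) * norm_inf (matrix_inv (A ** transpose A) *v (A *v gt)) \<le> p"
  shows "g \<bullet> (row_proj A *v d)
    \<le> (1 - tau) * p * (norm1 c + eps_c) + eps_g * ((norm1 c + eps_c) / kap)"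
proof -
  define lam where "lam = matrix_inv (A ** transpose A) *v (A *v gt)"
  have full_rank: "invertible (A ** transpose A)"
    by (rule invertible_mult_transpose[OF \<open>0 < kap\<close> sigma_A])
  have lam_le: "norm_inf lam \<le> (1 - tau) * p"
    using pi_bound \<open>tau < 1\<close> by (simp add: lam_def field_simps)
  have "gt \<bullet> (row_proj A *v d) = - (lam \<bullet> ct)"
    by (simp only: row_proj_feasible[OF feas] inner_minus_right
        inner_transpose_matrix_inv[OF full_rank] lam_def)
  also have "\<dots> \<le> norm_inf lam * norm1 ct"
    using abs_inner_le_norm_inf_mult_norm1[of lam ct] by linarith
  also have "\<dots> \<le> (1 - tau) * p * (norm1 c + eps_c)"
    using lam_le norm1_triangle_ineq[of c "ct - c"] err_c
    by (intro mult_mono) (auto intro: order_trans[OF norm_inf_nonneg] simp: norm1_nonneg)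
  finally have gt_part: "gt \<bullet> (row_proj A *v d) \<le> (1 - tau) * p * (norm1 c + eps_c)" .
  have "(g - gt) \<bullet> (row_proj A *v d) \<le> norm (g - gt) * norm (row_proj A *v d)"
    by (rule norm_cauchy_schwarz)
  also have "\<dots> \<le> eps_g * ((norm1 c + eps_c) / kap)"
    using err_g norm_row_proj_step_le[OF \<open>0 < kap\<close> sigma_A feas err_c]
    by (intro mult_mono) (auto simp: norm_minus_commute intro: order_trans[OF norm_ge_zero])
  finally show ?thesis
    using gt_part by (simp add: inner_diff_left)
qed

lemma null_proj_perturb_bounds:
  fixes A B :: "real^'n^'m"
  assumes full_rank_A: "invertible (A ** transpose A)"
    and proj_diff: "norm (null_proj A *v g - null_proj B *v g) \<le> s * norm g"
    and err_g: "norm (gt - g) \<le> eps_g"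
  shows "norm (null_proj A *v gt) \<le> norm (null_proj B *v g) + s * norm g + eps_g"
    and "g \<bullet> (null_proj B *v g) - s * (norm g)\<^sup>2 - eps_g * norm g \<le> g \<bullet> (null_proj A *v gt)"
proof -
  define e where "e = null_proj A *v (gt - g)"
  have split: "null_proj A *v gt
      = null_proj B *v g + (null_proj A *v g - null_proj B *v g) + e"
    by (simp add: e_def matrix_vector_mult_diff_distrib)
  have e_le: "norm e \<le> eps_g"
    unfolding e_def using norm_null_proj_le[OF full_rank_A] err_g by (rule order_trans)
  show "norm (null_proj A *v gt) \<le> norm (null_proj B *v g) + s * norm g + eps_g"
    unfolding split using proj_diff e_le norm_triangle_le by (smt (verit) norm_triangle_ineq)
  have "\<bar>g \<bullet> (null_proj A *v g - null_proj B *v g)\<bar> \<le> s * (norm g)\<^sup>2"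
    using Cauchy_Schwarz_ineq2 mult_left_mono[OF proj_diff norm_ge_zero]
    by (smt (verit) mult.left_commute power2_eq_square)
  moreover have "\<bar>g \<bullet> e\<bar> \<le> eps_g * norm g"
    using Cauchy_Schwarz_ineq2 mult_left_mono[OF e_le norm_ge_zero] by (smt (verit) mult.commute)
  ultimately show "g \<bullet> (null_proj B *v g) - s * (norm g)\<^sup>2 - eps_g * norm g \<le> g \<bullet> (null_proj A *v gt)"
    unfolding split inner_add_right by linarith
qed

lemma norm_step_le:
  fixes A B :: "real^'n^'m"
  assumes "0 < kap" and sigma_A: "\<And>y. kap * norm y \<le> norm (transpose A *v y)"
    and proj_diff: "norm (null_proj A *v g - null_proj B *v g) \<le> s * norm g"
    and "0 < bet" and feas: "ct + A *v d = 0"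
    and opt: "\<And>d'. ct + A *v d' = 0 \<Longrightarrow>
        1/2 * bet * (norm d)\<^sup>2 + gt \<bullet> d \<le> 1/2 * bet * (norm d')\<^sup>2 + gt \<bullet> d'"
    and err_c: "norm1 (ct - c) \<le> eps_c" and err_g: "norm (gt - g) \<le> eps_g"
  shows "norm d \<le> (1 / bet) * (norm (null_proj B *v g) + s * norm g + eps_g)
    + (norm1 c + eps_c) / kap"
proof -
  have full_rank_A: "invertible (A ** transpose A)"
    by (rule invertible_mult_transpose[OF \<open>0 < kap\<close> sigma_A])
  have "norm d \<le> norm (null_proj A *v d) + norm (row_proj A *v d)"
    using norm_triangle_ineq[of "null_proj A *v d" "row_proj A *v d"]
    by (simp only: null_proj_add_row_proj)
  also have "norm (null_proj A *v d) = (1 / bet) * norm (null_proj A *v gt)"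
    using \<open>0 < bet\<close> by (simp add: null_proj_qp_solution[OF full_rank_A \<open>0 < bet\<close> feas opt])
  finally have "norm d \<le> (1 / bet) * norm (null_proj A *v gt) + norm (row_proj A *v d)" .
  moreover have "(1 / bet) * norm (null_proj A *v gt)
      \<le> (1 / bet) * (norm (null_proj B *v g) + s * norm g + eps_g)"
    by (rule mult_left_mono[OF null_proj_perturb_bounds(1)[OF full_rank_A proj_diff err_g]])
      (use \<open>0 < bet\<close> in simp)
  ultimately show ?thesis
    using norm_row_proj_step_le[OF \<open>0 < kap\<close> sigma_A feas err_c] by linarith
qed

lemma inner_step_le:
  fixes A B :: "real^'n^'m"
  assumes "0 < kap" and sigma_A: "\<And>y. kap * norm y \<le> norm (transpose A *v y)"
    and proj_diff: "norm (null_proj A *v g - null_proj B *v g) \<le> s * norm g"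
    and "0 < bet" and feas: "ct + A *v d = 0"
    and opt: "\<And>d'. ct + A *v d' = 0 \<Longrightarrow>
        1/2 * bet * (norm d)\<^sup>2 + gt \<bullet> d \<le> 1/2 * bet * (norm d')\<^sup>2 + gt \<bullet> d'"
    and err_c: "norm1 (ct - c) \<le> eps_c" and err_g: "norm (gt - g) \<le> eps_g"
    and "tau < 1"
    and pi_bound: "1 / (1 - tau) * norm_inf (matrix_inv (A ** transpose A) *v (A *v gt)) \<le> p"
  shows "g \<bullet> d \<le> - ((1 / bet) * (g \<bullet> (null_proj B *v g) - s * (norm g)\<^sup>2 - eps_g * norm g))
    + ((1 - tau) * p * (norm1 c + eps_c) + eps_g * ((norm1 c + eps_c) / kap))"
proof -
  have full_rank_A: "invertible (A ** transpose A)"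
    by (rule invertible_mult_transpose[OF \<open>0 < kap\<close> sigma_A])
  have "g \<bullet> d = g \<bullet> (null_proj A *v d + row_proj A *v d)"
    by (simp only: null_proj_add_row_proj)
  also have "\<dots> = - ((1 / bet) * (g \<bullet> (null_proj A *v gt))) + g \<bullet> (row_proj A *v d)"
    by (simp add: null_proj_qp_solution[OF full_rank_A \<open>0 < bet\<close> feas opt]
        inner_add_right inner_diff_right)
  finally have "g \<bullet> d = - ((1 / bet) * (g \<bullet> (null_proj A *v gt))) + g \<bullet> (row_proj A *v d)" .
  moreover have "(1 / bet) * (g \<bullet> (null_proj B *v g) - s * (norm g)\<^sup>2 - eps_g * norm g)
      \<le> (1 / bet) * (g \<bullet> (null_proj A *v gt))"
    by (rule mult_left_mono[OF null_proj_perturb_bounds(2)[OF full_rank_A proj_diff err_g]])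
      (use \<open>0 < bet\<close> in simp)
  ultimately show ?thesis
    using inner_row_proj_step_le[OF \<open>0 < kap\<close> sigma_A feas err_c err_g \<open>tau < 1\<close> pi_bound]
    by linarith
qed

lemma merit_model_reduction_le:
  fixes A B :: "real^'n^'m" and c ct :: "real^'m" and g gt d :: "real^'n"
  assumes err_J: "\<And>z. norm1 ((A - B) *v z) \<le> eJ * norm z"
    and sigma_B: "\<And>y. gam * norm y \<le> norm (transpose B *v y)" and "eJ < gam"
    and "0 < bet"
    and feas: "ct + A *v d = 0"
    and opt: "\<And>d'. ct + A *v d' = 0 \<Longrightarrow>
        1/2 * bet * (norm d)\<^sup>2 + gt \<bullet> d \<le> 1/2 * bet * (norm d')\<^sup>2 + gt \<bullet> d'"
    and "tau < 1" and "0 \<le> p"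
    and pi_bound: "1 / (1 - tau) * norm_inf (matrix_inv (A ** transpose A) *v (A *v gt)) \<le> p"
    and err_c: "norm1 (ct - c) \<le> eps_c" and err_g: "norm (gt - g) \<le> eps_g"
  shows "g \<bullet> d + p * norm1 (c + B *v d) - p * norm1 c
    \<le> - (1 / bet) * (g \<bullet> (null_proj B *v g))
       + (1 / bet) * ((norm g)\<^sup>2 * (1 / gam) * eJ + eps_g * norm g)
       - tau * p * norm1 c
       + eps_g * (1 / (gam - eJ)) * (norm1 c + eps_c)
       + p * ((2 - tau) * eps_c
           + eJ * ((1 / (gam - eJ)) * (norm1 c + eps_c)
               + (1 / bet) * (norm (null_proj B *v g) + norm g * (1 / gam) * eJ + eps_g)))"
    (is "_ \<le> ?bound")
proof -
  define kap where "kap = gam - eJ"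
  have "0 < kap"
    using \<open>eJ < gam\<close> by (simp add: kap_def)
  have sigma_A: "kap * norm y \<le> norm (transpose A *v y)" for y
    unfolding kap_def by (rule transpose_lower_bound_perturb[OF err_J sigma_B])
  note proj_diff = norm_null_proj_perturb_le[OF err_J sigma_B \<open>eJ < gam\<close>]
  note norm_d = norm_step_le[OF \<open>0 < kap\<close> sigma_A proj_diff \<open>0 < bet\<close> feas opt err_c err_g]
  note inner_d = inner_step_le[OF \<open>0 < kap\<close> sigma_A proj_diff \<open>0 < bet\<close> feas opt err_c err_g
      \<open>tau < 1\<close> pi_bound]
  have "c + B *v d = (c - ct) - (A - B) *v d"
    using feas by (simp add: matrix_vector_mult_diff_rdistrib algebra_simps)
  then have "norm1 (c + B *v d) \<le> norm1 (c - ct) + norm1 ((A - B) *v d)"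
    by (simp only: norm1_triangle_ineq4)
  also have "\<dots> \<le> eps_c + eJ * norm d"
    using norm1_minus_commute[of c ct] err_c err_J[of d] by linarith
  also have "\<dots> \<le> eps_c + eJ * ((1 / bet) *
      (norm (null_proj B *v g) + eJ / gam * norm g + eps_g) + (norm1 c + eps_c) / kap)"
    using mult_left_mono[OF norm_d norm1_bound_nonneg[OF err_J]] by linarith
  finally have "p * norm1 (c + B *v d) \<le> p * (eps_c + eJ * ((1 / bet) *
      (norm (null_proj B *v g) + eJ / gam * norm g + eps_g) + (norm1 c + eps_c) / kap))"
    using \<open>0 \<le> p\<close> by (rule mult_left_mono)
  moreover have "?bound = - ((1 / bet) * (g \<bullet> (null_proj B *v g) - eJ / gam * (norm g)\<^sup>2 - eps_g * norm g))
      + ((1 - tau) * p * (norm1 c + eps_c) + eps_g * ((norm1 c + eps_c) / kap))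
      + p * (eps_c + eJ * ((1 / bet) *
      (norm (null_proj B *v g) + eJ / gam * norm g + eps_g) + (norm1 c + eps_c) / kap))
      - p * norm1 c"
    unfolding kap_def[symmetric] divide_inverse by (simp add: algebra_simps)
  ultimately show ?thesis
    using inner_d by linarith
qed

theorem lemma3p2:
  fixes f :: "real^'n \<Rightarrow> real" and c :: "real^'n \<Rightarrow> real^'m"
    and g :: "real^'n \<Rightarrow> real^'n" and J :: "real^'n \<Rightarrow> real^'n^'m"
    and ft :: "real^'n \<Rightarrow> real" and ct :: "real^'n \<Rightarrow> real^'m"
    and gt :: "real^'n \<Rightarrow> real^'n" and Jt :: "real^'n \<Rightarrow> real^'n^'m"
    and eps_f eps_c eps_g eps_J gamma tau :: real
    and x d :: "nat \<Rightarrow> real^'n" and beta pi :: "nat \<Rightarrow> real"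
  assumes mn: "CARD('m) < CARD('n)"
    and grad: "\<And>z. (f has_derivative (\<lambda>h. g z \<bullet> h)) (at z)"
    and jac: "\<And>z. (c has_derivative (\<lambda>h. J z *v h)) (at z)"
    and err_f: "\<And>z. \<bar>ft z - f z\<bar> \<le> eps_f"
    and err_c: "\<And>z. norm1 (ct z - c z) \<le> eps_c"
    and err_g: "\<And>z. norm (gt z - g z) \<le> eps_g"
    and err_J: "\<And>z. norm12 (Jt z - J z) \<le> eps_J"
    and sig: "\<And>k. sigma_min (J (x k)) \<ge> gamma"
    and gam: "gamma > eps_J"
    and beta_pos: "\<And>k. beta k > 0"
    and d_feas: "\<And>k. ct (x k) + Jt (x k) *v d k = 0"
    and d_opt: "\<And>k d'. ct (x k) + Jt (x k) *v d' = 0 \<Longrightarrow>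
        1/2 * beta k * (norm (d k))\<^sup>2 + gt (x k) \<bullet> d k
          \<le> 1/2 * beta k * (norm d')\<^sup>2 + gt (x k) \<bullet> d'"
    and tau: "0 < tau" "tau < 1"
    and pi_pos: "\<And>k. pi k > 0"
    and pi_bound: "\<And>k. pi k \<ge> 1 / (1 - tau) *
        norm_inf (matrix_inv (Jt (x k) ** transpose (Jt (x k))) *v (Jt (x k) *v gt (x k)))"
  shows "\<forall>k. (let delta = 1 / (gamma - eps_J); eta = 1 / gamma;
              gk = g (x k); ck = c (x k); Jk = J (x k); Pk = null_proj (J (x k));
              ell = gk \<bullet> d k + pi k * norm1 (ck + Jk *v d k) - pi k * norm1 ck
          in ell \<le> - (1 / beta k) * (gk \<bullet> (Pk *v gk))
               + (1 / beta k) * ((norm gk)\<^sup>2 * eta * eps_J + eps_g * norm gk)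
               - tau * pi k * norm1 ck
               + eps_g * delta * (norm1 ck + eps_c)
               + pi k * ((2 - tau) * eps_c
                   + eps_J * (delta * (norm1 ck + eps_c)
                       + (1 / beta k) * (norm (Pk *v gk) + norm gk * eta * eps_J + eps_g))))"
(* The bound holds at each iterate separately. *)
proof -
  have err_J_k: "norm1 ((Jt (x k) - J (x k)) *v z) \<le> eps_J * norm z" for k z
    by (rule order_trans[OF norm1_mult_le_norm12 mult_right_mono[OF err_J norm_ge_zero]])
  show ?thesis
    unfolding Let_def
    by (intro allI merit_model_reduction_le[OF err_J_k sigma_min_le_norm_transpose[OF sig] gam
          beta_pos d_feas d_opt tau(2) less_imp_le[OF pi_pos] pi_bound err_c err_g])
qed

end
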